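(* For any real symmetric $n\times n$ matrix $M$, there exists a basis $\{f_1,\dots,f_n\}$ of $\mathbb R^n$ consisting of eigenfunctions of $M$ each of which has minimal support.
   Context: An eigenfunction is a nonzero eigenvector of $M$. For $f\in\mathbb R^n$, $\mathrm{supp}(f)=\{i\in\{1,\dots,n\}: f(i)\ne0\}$. An eigenfunction $f$ has minimal support if every eigenfunction $g$ for the same eigenvalue as $f$ with $\mathrm{supp}(g)\subseteq\mathrm{supp}(f)$ satisfies $\mathrm{supp}(g)=\mathrm{supp}(f)$. *)

theory Defs
  imports "HOL-Analysis.Analysis"
begin

definition supp_vec :: "real^'n \<Rightarrow> 'n set" where
  "supp_vec f = {i. f $ i \<noteq> 0}"

definition eigenfunction_for :: "real^'n^'n \<Rightarrow> real \<Rightarrow> real^'n \<Rightarrow> bool" where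
  "eigenfunction_for M lam f \<longleftrightarrow> f \<noteq> 0 \<and> M *v f = lam *\<^sub>R f"

definition eigenfunction :: "real^'n^'n \<Rightarrow> real^'n \<Rightarrow> bool" where
  "eigenfunction M f \<longleftrightarrow> (\<exists>lam. eigenfunction_for M lam f)"

definition minimal_support :: "real^'n^'n \<Rightarrow> real^'n \<Rightarrow> bool" where
  "minimal_support M f \<longleftrightarrow> (\<exists>lam. eigenfunction_for M lam f \<and>
     (\<forall>g. eigenfunction_for M lam g \<and> supp_vec g \<subseteq> supp_vec f \<longrightarrow> supp_vec g = supp_vec f))"

end

theory Submission imports Defs begin

text \<open>The eigenvectors of a self-adjoint operator f span the space, by a variational argument:
  on an f-invariant subspace W, a maximiser x of y \<bullet> f y on the unit sphere of W is an
  eigenvector, since the quadratic form l (y \<bullet> y) - y \<bullet> f y with l = x \<bullet> f x is nonnegative on W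
  and vanishes at x. Applied to the orthogonal complement of the span of all eigenvectors, which is
  f-invariant, this shows that the complement is trivial.
  Every eigenvector v lies in the span of the minimal-support eigenfunctions, by induction on the
  size of its support: if v is not of minimal support, there is an eigenfunction g for the same
  eigenvalue with strictly smaller support, and subtracting a suitable multiple of g from v kills one
  more coordinate. A maximal independent set of minimal-support eigenfunctions is then a basis.\<close>

lemma linear_coeff_eq_0_if_quadratic_nonneg:
  fixes b c :: real
  assumes nonneg: "\<And>t. 0 \<le> b * t + c * t\<^sup>2"
  shows "b = 0"
proof (rule ccontr)
  assume "b \<noteq> 0"
  define d where "d = \<bar>c\<bar> + 1"
  have "d > 0" "c - d \<le> -1" by (auto simp: d_def)
  have "b * (- b / d) + c * (- b / d)\<^sup>2 = b\<^sup>2 * (c - d) / d\<^sup>2"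
    using \<open>d > 0\<close> by (simp add: field_simps power2_eq_square)
  also have "\<dots> < 0"
    using \<open>b \<noteq> 0\<close> \<open>d > 0\<close> \<open>c - d \<le> -1\<close> by (simp add: divide_neg_pos mult_pos_neg)
  finally show False using nonneg[of "- b / d"] by linarith
qed

lemma selfadjoint_quadratic_form_maximizer_is_eigenvector:
  fixes f :: "'a::real_inner \<Rightarrow> 'a"
  assumes "linear f" and selfadjoint: "\<And>x y. f x \<bullet> y = x \<bullet> f y"
    and "subspace W" and "f ` W \<subseteq> W" and "x \<in> W" and "x \<bullet> x = 1"
    and max: "\<And>y. y \<in> W \<Longrightarrow> y \<bullet> f y \<le> (x \<bullet> f x) * (y \<bullet> y)"
  shows "f x = (x \<bullet> f x) *\<^sub>R x"
proof -
  define l where "l = x \<bullet> f x"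
  define z where "z = l *\<^sub>R x - f x"
  have "z \<in> W"
    using assms(3-5) by (auto simp: z_def intro: subspace_diff subspace_scale)
  have "x \<bullet> f z = z \<bullet> f x"
    using selfadjoint[of z x] by (simp add: inner_commute)
  have "0 \<le> 2 * (l * (x \<bullet> z) - z \<bullet> f x) * t + (l * (z \<bullet> z) - z \<bullet> f z) * t\<^sup>2" for t
  proof -
    have "x + t *\<^sub>R z \<in> W"
      using \<open>subspace W\<close> \<open>x \<in> W\<close> \<open>z \<in> W\<close> by (simp add: subspace_add subspace_scale)
    then have "0 \<le> l * ((x + t *\<^sub>R z) \<bullet> (x + t *\<^sub>R z)) - (x + t *\<^sub>R z) \<bullet> f (x + t *\<^sub>R z)"
      using max by (simp add: l_def)
    also have "\<dots> = 2 * (l * (x \<bullet> z) - z \<bullet> f x) * t + (l * (z \<bullet> z) - z \<bullet> f z) * t\<^sup>2"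
      using \<open>linear f\<close> \<open>x \<bullet> x = 1\<close> \<open>x \<bullet> f z = z \<bullet> f x\<close>
      by (simp add: linear_add linear_scale inner_commute[of z x] l_def power2_eq_square algebra_simps)
    finally show ?thesis .
  qed
  then have "l * (x \<bullet> z) - z \<bullet> f x = 0"
    using linear_coeff_eq_0_if_quadratic_nonneg by fastforce
  then have "z \<bullet> z = 0"
    by (simp add: z_def inner_diff_left inner_commute)
  then have "z = 0" by simp
  then show ?thesis by (simp add: z_def l_def)
qed

lemma selfadjoint_invariant_subspace_has_eigenvector:
  fixes f :: "'a::euclidean_space \<Rightarrow> 'a"
  assumes "linear f" and "\<And>x y. f x \<bullet> y = x \<bullet> f y"
    and "subspace W" and "f ` W \<subseteq> W" and "W \<noteq> {0}"
  obtains x l where "x \<in> W" "x \<noteq> 0" "f x = l *\<^sub>R x"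
proof -
  let ?S = "W \<inter> sphere 0 1"
  have "compact ?S"
    using closed_Int_compact[OF closed_subspace[OF \<open>subspace W\<close>] compact_sphere] .
  obtain w where "w \<in> W" "w \<noteq> 0"
    using \<open>W \<noteq> {0}\<close> subspace_0[OF \<open>subspace W\<close>] by blast
  then have "w /\<^sub>R norm w \<in> ?S"
    using \<open>subspace W\<close> by (simp add: subspace_scale)
  moreover have "continuous_on ?S (\<lambda>y. y \<bullet> f y)"
    using \<open>linear f\<close> by (intro continuous_intros linear_continuous_on) (simp add: linear_conv_bounded_linear)
  ultimately obtain x where "x \<in> ?S" and x_max: "\<And>u. u \<in> ?S \<Longrightarrow> u \<bullet> f u \<le> x \<bullet> f x"
    using continuous_attains_sup[OF \<open>compact ?S\<close>] by blast
  have "y \<bullet> f y \<le> (x \<bullet> f x) * (y \<bullet> y)" if "y \<in> W" for y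
  proof (cases "y = 0")
    case False
    then have "y /\<^sub>R norm y \<in> ?S"
      using \<open>y \<in> W\<close> \<open>subspace W\<close> by (simp add: subspace_scale)
    then have "(y /\<^sub>R norm y) \<bullet> f (y /\<^sub>R norm y) \<le> x \<bullet> f x"
      by (rule x_max)
    then have "(y \<bullet> f y) / (norm y)\<^sup>2 \<le> x \<bullet> f x"
      using \<open>linear f\<close> by (simp add: linear_scale power2_eq_square field_simps)
    then show ?thesis
      using False by (simp add: divide_le_eq power2_norm_eq_inner mult.commute)
  qed (use \<open>linear f\<close> linear_0 in auto)
  then have "f x = (x \<bullet> f x) *\<^sub>R x"
    using \<open>x \<in> ?S\<close> assms(1-4)
    by (intro selfadjoint_quadratic_form_maximizer_is_eigenvector) (auto simp: norm_eq_1)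
  with \<open>x \<in> ?S\<close> that show ?thesis by fastforce
qed

lemma selfadjoint_orthogonal_comp_invariant:
  assumes "\<And>x y. f x \<bullet> y = x \<bullet> f y" and "f ` U \<subseteq> U"
  shows "f ` (U\<^sup>\<bottom>) \<subseteq> U\<^sup>\<bottom>"
proof
  fix v assume "v \<in> f ` (U\<^sup>\<bottom>)"
  then obtain x where "x \<in> U\<^sup>\<bottom>" "v = f x" by blast
  have "y \<bullet> f x = 0" if "y \<in> U" for y
  proof -
    have "y \<bullet> f x = f y \<bullet> x"
      using assms(1)[of y x] by simp
    also have "\<dots> = 0"
      using \<open>x \<in> U\<^sup>\<bottom>\<close> \<open>y \<in> U\<close> assms(2) by (auto simp: orthogonal_comp_def orthogonal_def)
    finally show ?thesis .
  qed
  then show "v \<in> U\<^sup>\<bottom>"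
    by (simp add: \<open>v = f x\<close> orthogonal_comp_def orthogonal_def)
qed

lemma selfadjoint_eigenvectors_span:
  fixes f :: "'a::euclidean_space \<Rightarrow> 'a"
  assumes "linear f" and selfadjoint: "\<And>x y. f x \<bullet> y = x \<bullet> f y"
  shows "span {v. \<exists>l. f v = l *\<^sub>R v} = UNIV"
proof -
  let ?E = "{v. \<exists>l. f v = l *\<^sub>R v}"
  have "f v \<in> ?E" if "v \<in> ?E" for v
  proof -
    obtain l where "f v = l *\<^sub>R v" using \<open>v \<in> ?E\<close> by blast
    then have "f (f v) = l *\<^sub>R f v"
      using linear_scale[OF \<open>linear f\<close>] by simp
    then show ?thesis by blast
  qed
  then have "f ` ?E \<subseteq> ?E" by blast
  have "f ` span ?E = span (f ` ?E)"
    using span_linear_image[OF \<open>linear f\<close>] by simp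
  also have "\<dots> \<subseteq> span ?E"
    using \<open>f ` ?E \<subseteq> ?E\<close> by (rule span_mono)
  finally have invariant: "f ` ((span ?E)\<^sup>\<bottom>) \<subseteq> (span ?E)\<^sup>\<bottom>"
    by (rule selfadjoint_orthogonal_comp_invariant[OF selfadjoint])
  have "(span ?E)\<^sup>\<bottom> = {0}"
  proof (rule ccontr)
    assume "(span ?E)\<^sup>\<bottom> \<noteq> {0}"
    then obtain x l where "x \<in> (span ?E)\<^sup>\<bottom>" "x \<noteq> 0" "f x = l *\<^sub>R x"
      by (rule selfadjoint_invariant_subspace_has_eigenvector[OF \<open>linear f\<close> selfadjoint
            subspace_orthogonal_comp invariant])
    then have "x \<in> span ?E \<inter> (span ?E)\<^sup>\<bottom>"
      by (auto intro: span_base)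
    with \<open>x \<noteq> 0\<close> show False
      using orthogonal_Int_0[OF subspace_span] by blast
  qed
  then show ?thesis
    using orthogonal_comp_self[OF subspace_span, of ?E] by simp
qed

lemma symmetric_matrix_selfadjoint:
  fixes M :: "real^'n^'n"
  assumes "transpose M = M"
  shows "(M *v x) \<bullet> y = x \<bullet> (M *v y)"
  by (metis assms dot_lmul_matrix vector_transpose_matrix)

lemma supp_vec_eliminate_coordinate:
  assumes "supp_vec g \<subseteq> supp_vec v" and "g $ i \<noteq> 0"
  shows "supp_vec (v - (v $ i / g $ i) *\<^sub>R g) \<subset> supp_vec v"
proof -
  have "supp_vec (v - (v $ i / g $ i) *\<^sub>R g) \<subseteq> supp_vec v \<union> supp_vec g"
    by (auto simp: supp_vec_def)
  moreover have "i \<notin> supp_vec (v - (v $ i / g $ i) *\<^sub>R g)" "i \<in> supp_vec g"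
    using \<open>g $ i \<noteq> 0\<close> by (auto simp: supp_vec_def)
  ultimately show ?thesis
    using \<open>supp_vec g \<subseteq> supp_vec v\<close> by blast
qed

lemma eigenvector_in_span_minimal_support:
  fixes M :: "real^'n^'n"
  assumes "M *v v = l *\<^sub>R v"
  shows "v \<in> span {f. minimal_support M f}"
  using assms
proof (induction "card (supp_vec v)" arbitrary: v rule: less_induct)
  case less
  show ?case
  proof (cases "v = 0 \<or> minimal_support M v")
    case True
    then show ?thesis by (auto intro: span_zero span_base)
  next
    case False
    then obtain g where g: "eigenfunction_for M l g" "supp_vec g \<subset> supp_vec v"
      using less.prems unfolding minimal_support_def eigenfunction_for_def by blast
    then obtain i where "g $ i \<noteq> 0"
      unfolding eigenfunction_for_def by (metis vec_eq_iff zero_index)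
    define v' where "v' = v - (v $ i / g $ i) *\<^sub>R g"
    have "M *v v' = l *\<^sub>R v'"
      using less.prems g(1)
      by (simp add: v'_def eigenfunction_for_def matrix_vector_mult_diff_distrib
          matrix_vector_mult_scaleR scaleR_diff_right)
    moreover have "supp_vec v' \<subset> supp_vec v"
      unfolding v'_def using g(2) \<open>g $ i \<noteq> 0\<close> by (intro supp_vec_eliminate_coordinate) auto
    ultimately have "v' \<in> span {f. minimal_support M f}"
      by (intro less.hyps) (auto intro: psubset_card_mono)
    moreover have "g \<in> span {f. minimal_support M f}"
      using g by (intro less.hyps) (auto intro: psubset_card_mono simp: eigenfunction_for_def)
    ultimately have "v' + (v $ i / g $ i) *\<^sub>R g \<in> span {f. minimal_support M f}"
      by (intro span_add span_scale)
    then show ?thesis by (simp add: v'_def)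
  qed
qed

theorem lemma2p2:
  fixes M :: "real^'n^'n"
  assumes "transpose M = M"
  shows "\<exists>B :: (real^'n) set. independent B \<and> span B = UNIV \<and>
           (\<forall>f\<in>B. eigenfunction M f \<and> minimal_support M f)"
proof -
  let ?S = "{f. minimal_support M f}"
  have "UNIV = span {v. \<exists>l. M *v v = l *\<^sub>R v}"
    using selfadjoint_eigenvectors_span[OF matrix_vector_mul_linear
        symmetric_matrix_selfadjoint[OF assms]] by simp
  also have "\<dots> \<subseteq> span ?S"
    using eigenvector_in_span_minimal_support by (intro span_minimal subspace_span) blast
  finally have "span ?S = UNIV" by blast
  obtain B where "B \<subseteq> ?S" "independent B" "?S \<subseteq> span B"
    using maximal_independent_subset by blast
  then have "span B = UNIV"
    using \<open>span ?S = UNIV\<close> span_minimal[OF _ subspace_span] by blast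
  moreover have "\<forall>f\<in>B. eigenfunction M f \<and> minimal_support M f"
    using \<open>B \<subseteq> ?S\<close> by (auto simp: eigenfunction_def minimal_support_def)
  ultimately show ?thesis
    using \<open>independent B\<close> by blast
qed

end
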